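(* Let $m\ge0$, let $f:\mathbb{R}^n\to\mathbb{R}$ be $m$-weakly convex, $x_k\in\mathbb{R}^n$, $\rho>0$, $\beta\in(0,1)$. Let $\tilde f_j:\mathbb{R}^n\to\mathbb{R}$ be convex with $\tilde f_j(x)\le f(x)+\frac m2\|x-x_k\|^2$ for all $x$; set $z_{j+1}=\arg\min_x\{\tilde f_j(x)+\frac\rho2\|x-x_k\|^2\}$, $\eta_j=\min_x\{\tilde f_j(x)+\frac\rho2\|x-x_k\|^2\}$, $s_{j+1}=\rho(x_k-z_{j+1})$. Let $g_{j+1}\in\mathbb{R}^n$ satisfy $g_{j+1}-m(z_{j+1}-x_k)\in\partial f(z_{j+1})$, and let $\tilde f_{j+1}:\mathbb{R}^n\to\mathbb{R}$ be convex with, for all $x\in\mathbb{R}^n$: (i) $\tilde f_{j+1}(x)\le f(x)+\frac m2\|x-x_k\|^2$; (ii) $\tilde f_{j+1}(x)\ge\tilde f_j(z_{j+1})+\langle s_{j+1},x-z_{j+1}\rangle$; (iii) $\tilde f_{j+1}(x)\ge f(z_{j+1})+\frac m2\|z_{j+1}-x_k\|^2+\langle g_{j+1},x-z_{j+1}\rangle$. Let $\eta_{j+1}=\min_x\{\tilde f_{j+1}(x)+\frac\rho2\|x-x_k\|^2\}$ and $\tilde\epsilon_{j+1}=f(z_{j+1})+\frac m2\|z_{j+1}-x_k\|^2-\tilde f_j(z_{j+1})$. Then $$\eta_{j+1}\ge\eta_j+\frac12\min\Big\{\tilde\epsilon_{j+1},\ \frac{\rho\,\tilde\epsilon_{j+1}^2}{\|g_{j+1}-s_{j+1}\|^2}\Big\}$$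 (with the second term read as $+\infty$ if $g_{j+1}=s_{j+1}$). If moreover $f(x_k)-\big(f(z_{j+1})+\frac m2\|z_{j+1}-x_k\|^2\big)<\beta\big(f(x_k)-\tilde f_j(z_{j+1})\big)$, then, with $\tilde\Delta_j:=f(x_k)-\eta_j$, $$\eta_{j+1}\ge\eta_j+\frac12\min\Big\{(1-\beta)\tilde\Delta_j,\ \frac{(1-\beta)^2\rho\,\tilde\Delta_j^2}{\|g_{j+1}-s_{j+1}\|^2}\Big\}.$$
   Context: A function $f$ is $m$-weakly convex ($m\ge 0$) if $x\mapsto f(x)+\frac{m}{2}\|x\|^2$ is convex. For such $f$, the (Fréchet) subdifferential is $\partial f(x)=\{v\in\mathbb{R}^n: f(y)\ge f(x)+\langle v,y-x\rangle-\frac{m}{2}\|y-x\|^2\ \forall y\}$. *)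

theory Defs
  imports "HOL-Analysis.Analysis"
begin

definition weakly_convex :: "real \<Rightarrow> ('a::euclidean_space \<Rightarrow> real) \<Rightarrow> bool" where
  "weakly_convex m f \<longleftrightarrow> convex_on UNIV (\<lambda>x. f x + m / 2 * norm x ^ 2)"

definition wc_subdiff :: "real \<Rightarrow> ('a::euclidean_space \<Rightarrow> real) \<Rightarrow> 'a \<Rightarrow> 'a set" where
  "wc_subdiff m f x = {v. \<forall>y. f y \<ge> f x + inner v (y - x) - m / 2 * norm (y - x) ^ 2}"

end

theory Submission
  imports Defs
begin

text \<open>The new model lies above the convex combination, with weight \<open>\<lambda> \<in> [0, 1]\<close>, of the
two cuts through \<open>z\<close>: the aggregate cut of slope \<open>s\<close> and the linearization of slope \<open>g\<close>, which
is \<open>\<epsilon>\<close> higher at \<open>z\<close>. Adding the proximal term and minimizing over \<open>x\<close> in closed form gives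
\<open>\<eta>\<^sub>1 \<ge> \<eta>\<^sub>0 + \<lambda> \<epsilon> - \<lambda>\<^sup>2 \<parallel>g - s\<parallel>\<^sup>2 / (2 \<rho>)\<close>, because \<open>s = \<rho> (x\<^sub>k - z)\<close> is exactly the slope
that cancels the linear part of \<open>\<rho>/2 \<parallel>x - x\<^sub>k\<parallel>\<^sup>2\<close> at \<open>z\<close>. Optimizing \<open>\<lambda>\<close> yields the first
estimate; the second follows from it since the descent test forces
\<open>\<epsilon> \<ge> (1 - \<beta>) (f x\<^sub>k - \<eta>\<^sub>0)\<close>.\<close>

lemma half_norm_sq_plus_inner_ge:
  fixes w d :: "'a::real_inner"
  assumes "\<rho> > 0"
  shows "- (l\<^sup>2 * (norm d)\<^sup>2 / (2 * \<rho>)) \<le> \<rho> / 2 * (norm w)\<^sup>2 + l * inner d w"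
proof -
  have "0 \<le> (norm (\<rho> *\<^sub>R w + l *\<^sub>R d))\<^sup>2 / (2 * \<rho>)"
    using assms by simp
  also have "\<dots> = \<rho> / 2 * (norm w)\<^sup>2 + l * inner d w + l\<^sup>2 * (norm d)\<^sup>2 / (2 * \<rho>)"
    using assms unfolding power2_norm_eq_inner
    by (simp add: inner_add_left inner_add_right inner_commute field_simps power2_eq_square)
  finally show ?thesis by simp
qed

lemma prox_value_above_two_cuts:
  fixes \<phi> :: "'a::real_inner \<Rightarrow> real"
  assumes rho: "\<rho> > 0" and l: "0 \<le> l" "l \<le> 1"
    and cut_s: "\<And>x. a + inner (\<rho> *\<^sub>R (xk - z)) (x - z) \<le> \<phi> x"
    and cut_g: "\<And>x. a + \<epsilon> + inner g (x - z) \<le> \<phi> x"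
  shows "a + \<rho> / 2 * (norm (z - xk))\<^sup>2 + l * \<epsilon> - l\<^sup>2 * (norm (g - \<rho> *\<^sub>R (xk - z)))\<^sup>2 / (2 * \<rho>)
           \<le> (INF x. \<phi> x + \<rho> / 2 * (norm (x - xk))\<^sup>2)"
proof (rule cINF_greatest)
  fix x
  define s where "s = \<rho> *\<^sub>R (xk - z)"
  define w where "w = x - z"
  have combined: "a + l * \<epsilon> + inner s w + l * inner (g - s) w \<le> \<phi> x"
  proof -
    have "(1 - l) * (a + inner s w) \<le> (1 - l) * \<phi> x"
      using cut_s[of x] l unfolding s_def w_def by (intro mult_left_mono) auto
    moreover have "l * (a + \<epsilon> + inner g w) \<le> l * \<phi> x"
      using cut_g[of x] l unfolding w_def by (intro mult_left_mono) auto
    ultimately show ?thesis by (simp add: inner_diff_left algebra_simps)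
  qed
  have prox_term: "\<rho> / 2 * (norm (x - xk))\<^sup>2
      = \<rho> / 2 * (norm w)\<^sup>2 - inner s w + \<rho> / 2 * (norm (z - xk))\<^sup>2"
    unfolding s_def w_def power2_norm_eq_inner
    by (simp add: inner_diff_left inner_diff_right inner_commute algebra_simps)
  show "a + \<rho> / 2 * (norm (z - xk))\<^sup>2 + l * \<epsilon> - l\<^sup>2 * (norm (g - \<rho> *\<^sub>R (xk - z)))\<^sup>2 / (2 * \<rho>)
          \<le> \<phi> x + \<rho> / 2 * (norm (x - xk))\<^sup>2"
    using combined prox_term half_norm_sq_plus_inner_ge[OF rho, of l "g - s" w]
    unfolding s_def by linarith
qed simp

text \<open>Maximizing \<open>\<lambda> e - \<lambda>\<^sup>2 D / (2 \<rho>)\<close> over \<open>[0, 1]\<close>: the unconstrained maximizer is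
\<open>\<lambda> = \<rho> e / D\<close>; when it exceeds \<open>1\<close>, the value at \<open>\<lambda> = 1\<close> is at least \<open>e / 2\<close>.\<close>

lemma ge_half_min_of_quadratic_bounds:
  fixes \<rho> D y e \<epsilon> :: real
  assumes rho: "\<rho> > 0" and D: "D \<ge> 0" and e: "0 \<le> e" "e \<le> \<epsilon>"
    and bound: "\<And>l. 0 \<le> l \<Longrightarrow> l \<le> 1 \<Longrightarrow> l * \<epsilon> - l\<^sup>2 * D / (2 * \<rho>) \<le> y"
  shows "1 / 2 * (if D = 0 then e else min e (\<rho> * e\<^sup>2 / D)) \<le> y"
proof (cases "D = 0")
  case True
  then show ?thesis using bound[of 1] e by simp
next
  case False
  then have Dpos: "D > 0" using D by simp
  show ?thesis
  proof (cases "\<rho> * e / D \<le> 1")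
    case True
    define l where "l = \<rho> * e / D"
    have "0 \<le> l" unfolding l_def using e rho Dpos by simp
    then have "l * e - l\<^sup>2 * D / (2 * \<rho>) \<le> y"
      using bound[of l] True e mult_left_mono[OF e(2)] unfolding l_def by fastforce
    moreover have "l * e - l\<^sup>2 * D / (2 * \<rho>) = \<rho> * e\<^sup>2 / D / 2"
      unfolding l_def using rho Dpos by (simp add: field_simps power2_eq_square)
    ultimately show ?thesis using False by (simp add: min_def)
  next
    case False
    then have "D / (2 * \<rho>) \<le> e / 2"
      using rho Dpos by (simp add: field_simps)
    then show ?thesis using bound[of 1] e \<open>D \<noteq> 0\<close> by (simp add: min_def)
  qed
qed

theorem mainTheorem7:
  fixes f ft0 ft1 :: "'a::euclidean_space \<Rightarrow> real"
    and m \<rho> \<beta> :: real and xk z g :: 'a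
  assumes m: "m \<ge> 0"
    and wc: "weakly_convex m f"
    and rho: "\<rho> > 0"
    and beta: "0 < \<beta>" "\<beta> < 1"
    and ft0_cvx: "convex_on UNIV ft0"
    and ft0_le: "\<forall>x. ft0 x \<le> f x + m / 2 * norm (x - xk) ^ 2"
    and z_min: "\<forall>x. ft0 z + \<rho> / 2 * norm (z - xk) ^ 2 \<le> ft0 x + \<rho> / 2 * norm (x - xk) ^ 2"
    and g: "g - m *\<^sub>R (z - xk) \<in> wc_subdiff m f z"
    and ft1_cvx: "convex_on UNIV ft1"
    and ft1_i: "\<forall>x. ft1 x \<le> f x + m / 2 * norm (x - xk) ^ 2"
    and ft1_ii: "\<forall>x. ft1 x \<ge> ft0 z + inner (\<rho> *\<^sub>R (xk - z)) (x - z)"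
    and ft1_iii: "\<forall>x. ft1 x \<ge> f z + m / 2 * norm (z - xk) ^ 2 + inner g (x - z)"
  defines "s \<equiv> \<rho> *\<^sub>R (xk - z)"
    and "\<eta>0 \<equiv> (INF x. ft0 x + \<rho> / 2 * norm (x - xk) ^ 2)"
    and "\<eta>1 \<equiv> (INF x. ft1 x + \<rho> / 2 * norm (x - xk) ^ 2)"
    and "\<epsilon> \<equiv> f z + m / 2 * norm (z - xk) ^ 2 - ft0 z"
  shows "\<eta>1 \<ge> \<eta>0 + 1 / 2 * (if g = s then \<epsilon>
                 else min \<epsilon> (\<rho> * \<epsilon> ^ 2 / norm (g - s) ^ 2))
       \<and> (f xk - (f z + m / 2 * norm (z - xk) ^ 2) < \<beta> * (f xk - ft0 z) \<longrightarrow>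
          \<eta>1 \<ge> \<eta>0 + 1 / 2 * (if g = s then (1 - \<beta>) * (f xk - \<eta>0)
                 else min ((1 - \<beta>) * (f xk - \<eta>0)) ((1 - \<beta>) ^ 2 * \<rho> * (f xk - \<eta>0) ^ 2 / norm (g - s) ^ 2)))"
proof -
  have eta0: "\<eta>0 = ft0 z + \<rho> / 2 * (norm (z - xk))\<^sup>2"
    unfolding \<eta>0_def by (rule cInf_eq_minimum) (use z_min in auto)
  have quadratic_bound: "l * \<epsilon> - l\<^sup>2 * (norm (g - s))\<^sup>2 / (2 * \<rho>) \<le> \<eta>1 - \<eta>0"
    if l: "0 \<le> l" "l \<le> 1" for l
  proof -
    have "ft0 z + \<epsilon> + inner g (x - z) \<le> ft1 x" for x
      using ft1_iii unfolding \<epsilon>_def by simp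
    from prox_value_above_two_cuts[OF rho l ft1_ii[rule_format] this]
    show ?thesis unfolding eta0 \<eta>1_def s_def by simp
  qed
  have increase: "\<eta>1 \<ge> \<eta>0 + 1 / 2 * (if g = s then e else min e (\<rho> * e\<^sup>2 / (norm (g - s))\<^sup>2))"
    if "0 \<le> e" "e \<le> \<epsilon>" for e
    using ge_half_min_of_quadratic_bounds[OF rho _ that quadratic_bound] by simp
  have "\<epsilon> \<ge> 0" using ft0_le unfolding \<epsilon>_def by simp
  moreover have "0 \<le> (1 - \<beta>) * (f xk - \<eta>0)"
  proof -
    have "\<eta>0 \<le> ft0 xk" using z_min[rule_format, of xk] unfolding eta0 by simp
    also have "\<dots> \<le> f xk" using ft0_le[rule_format, of xk] by simp
    finally show ?thesis using beta by simp
  qed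
  moreover have "(1 - \<beta>) * (f xk - \<eta>0) \<le> \<epsilon>"
    if descent: "f xk - (f z + m / 2 * norm (z - xk) ^ 2) < \<beta> * (f xk - ft0 z)"
  proof -
    have "(1 - \<beta>) * (f xk - \<eta>0) \<le> (1 - \<beta>) * (f xk - ft0 z)"
      unfolding eta0 using rho beta by (intro mult_left_mono) auto
    also have "\<dots> \<le> \<epsilon>" using descent unfolding \<epsilon>_def by (simp add: algebra_simps)
    finally show ?thesis .
  qed
  ultimately show ?thesis
    using increase[of \<epsilon>] increase[of "(1 - \<beta>) * (f xk - \<eta>0)"]
    by (auto simp: power_mult_distrib mult_ac)
qed

end
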